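(* Let $\mathcal{G}=(V,\emptyset,B)$ be a connected bidirected graph with $V=\{1,\dots,p\}$. Then $\tau(\mathcal{G})=p$. Moreover, if $n<p$, then $\hat\ell(\mathcal{G}\mid S_{0,n})=\infty$ almost surely.
   Context: $B$ is a set of 2-element subsets of $V$ (bidirected edges); $\mathcal{G}$ is connected if any two vertices are joined by a path of such edges. $PD(\mathcal{G})=PD(B)$ is the set of positive definite $p\times p$ matrices $\Sigma=(\sigma_{ij})$ with $\sigma_{ij}=0$ whenever $i\ne j$ and $\{i,j\}\notin B$. For an i.i.d. sample $X^{(1)},\dots,X^{(n)}$ from an absolutely continuous distribution on $\mathbb{R}^p$, $S_{0,n}=\frac1n\sum_s X^{(s)}(X^{(s)})^T$; $\ell(\Sigma\mid S)=-\log\det\Sigma-\mathrm{trace}(\Sigma^{-1}S)$; $\hat\ell(\mathcal{G}\mid S)=\sup_{\Sigma\in PD(\mathcal{G})}\ell(\Sigma\mid S)$; $\tau(\mathcal{G})=\min\{N\in\mathbb{N}:\hat\ell(\mathcal{G}\mid S_{0,n})<\infty\text{ a.s. for all }n\ge N\}$. *)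

theory Defs
  imports "HOL-Analysis.Analysis" "HOL-Probability.Probability"
begin

text \<open>Vertices are the elements of a finite index type 'p (so V has p = CARD('p) elements);
  B is a set of 2-element subsets of vertices (bidirected edges).\<close>

definition bidirected_edges :: "'p set set \<Rightarrow> bool" where
  "bidirected_edges B \<longleftrightarrow> (\<forall>e\<in>B. card e = 2)"

definition bg_connected :: "'p set set \<Rightarrow> bool" where
  "bg_connected B \<longleftrightarrow> (\<forall>i j. (i, j) \<in> {(a, b). {a, b} \<in> B}\<^sup>*)"

definition pos_def :: "real^'p^'p \<Rightarrow> bool" where
  "pos_def A \<longleftrightarrow> transpose A = A \<and> (\<forall>x. x \<noteq> 0 \<longrightarrow> x \<bullet> (A *v x) > 0)"

definition PD :: "'p set set \<Rightarrow> (real^'p^'p) set" where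
  "PD B = {\<Sigma>. pos_def \<Sigma> \<and> (\<forall>i j. i \<noteq> j \<and> {i, j} \<notin> B \<longrightarrow> \<Sigma> $ i $ j = 0)}"

definition loglik :: "real^'p^'p \<Rightarrow> real^'p^'p \<Rightarrow> real" where
  "loglik \<Sigma> S = - ln (det \<Sigma>) - trace (matrix_inv \<Sigma> ** S)"

definition max_loglik :: "'p set set \<Rightarrow> real^'p^'p \<Rightarrow> ereal" where
  "max_loglik B S = (SUP \<Sigma>\<in>PD B. ereal (loglik \<Sigma> S))"

definition outer :: "real^'p \<Rightarrow> real^'p^'p" where
  "outer x = (\<chi> i j. x $ i * x $ j)"

definition sample_cov :: "nat \<Rightarrow> (nat \<Rightarrow> real^'p) \<Rightarrow> real^'p^'p" where
  "sample_cov n X = (1 / real n) *\<^sub>R (\<Sum>s<n. outer (X s))"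

definition sample_measure :: "nat \<Rightarrow> (real^'p) measure \<Rightarrow> (nat \<Rightarrow> real^'p) measure" where
  "sample_measure n M = PiM {..<n} (\<lambda>_. M)"

definition tau :: "(real^'p) measure \<Rightarrow> 'p set set \<Rightarrow> nat" where
  "tau M B = (LEAST N. \<forall>n\<ge>N. AE X in sample_measure n M. max_loglik B (sample_cov n X) < \<infinity>)"

end

theory Submission
  imports Defs
begin

text \<open>
  If \<open>n \<ge> p\<close>, then almost surely some \<open>p\<close> of the sample vectors are linearly
  independent. Writing \<open>X\<close> for the matrix they form, Hadamard's inequality for the
  positive definite matrix \<open>X\<^sup>T \<Sigma>\<^sup>-\<^sup>1 X\<close> together with \<open>ln x \<le> x - 1\<close> bounds
  \<open>- ln det \<Sigma> - trace (\<Sigma>\<^sup>-\<^sup>1 S)\<close> from above uniformly in \<open>\<Sigma>\<close>.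

  If \<open>n < p\<close>, then almost surely the orthogonal complement of the sample contains a
  vector \<open>w\<close> without zero entries. Let \<open>\<Sigma>\<^sub>0\<close> be the sum of \<open>u u\<^sup>T\<close> over the edges
  \<open>{i, j}\<close>, where \<open>u = w\<^sub>j e\<^sub>i - w\<^sub>i e\<^sub>j\<close>. Then \<open>\<Sigma>\<^sub>0 + \<epsilon> I \<in> PD(B)\<close>, and
  \<open>\<Sigma>\<^sub>0 w = 0\<close>, so its determinant tends to \<open>0\<close> as \<open>\<epsilon> \<rightarrow> 0\<close>. Connectivity makes
  \<open>\<Sigma>\<^sub>0\<close> positive definite on \<open>w\<^sup>\<bottom>\<close>, which contains the sample, so
  \<open>trace ((\<Sigma>\<^sub>0 + \<epsilon> I)\<^sup>-\<^sup>1 S)\<close> stays bounded and the likelihood is unbounded.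

  Both almost sure statements reduce, one sample vector at a time, to the fact that
  a hyperplane is a null set for an absolutely continuous law.
\<close>

section \<open>Positive definite matrices and Hadamard's inequality\<close>

lemma matrix_inv_right:
  fixes A :: "real^'n^'n"
  assumes "invertible A"
  shows "A ** matrix_inv A = mat 1"
  using someI_ex[OF assms[unfolded invertible_def]] by (simp add: matrix_inv_def)

lemma matrix_inv_left:
  fixes A :: "real^'n^'n"
  assumes "invertible A"
  shows "matrix_inv A ** A = mat 1"
  using someI_ex[OF assms[unfolded invertible_def]] by (simp add: matrix_inv_def)

lemma pos_def_symmetric: "pos_def G \<Longrightarrow> G $ i $ j = G $ j $ i"
  unfolding pos_def_def by (metis transpose_def vec_lambda_beta)

lemma pos_def_nonneg: "pos_def G \<Longrightarrow> 0 \<le> x \<bullet> (G *v x)"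
  unfolding pos_def_def by (cases "x = 0") (auto intro: less_imp_le)

lemma pos_def_diag_pos:
  assumes "pos_def (G :: real^'n^'n)"
  shows "G $ k $ k > 0"
proof -
  have "axis k 1 \<bullet> (G *v axis k 1) > 0"
    using assms unfolding pos_def_def by (metis axis_eq_0_iff zero_neq_one)
  then show ?thesis by (simp add: matrix_vector_mult_basis inner_axis' column_def)
qed

lemma pos_def_congruence:
  fixes G L :: "real^'n^'n"
  assumes G: "pos_def G" and L: "invertible L"
  shows "pos_def (L ** G ** transpose L)"
  unfolding pos_def_def
proof safe
  show "transpose (L ** G ** transpose L) = L ** G ** transpose L"
    using G by (simp add: pos_def_def matrix_transpose_mul matrix_mul_assoc)
next
  fix x :: "real^'n" assume "x \<noteq> 0"
  moreover have "inj ((*v) (transpose L))"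
    using L by (simp add: inj_matrix_vector_mult transpose_invertible)
  ultimately have "transpose L *v x \<noteq> 0"
    by (metis injD matrix_vector_mult_0_right)
  then have "0 < (transpose L *v x) \<bullet> (G *v (transpose L *v x))"
    using G by (simp add: pos_def_def)
  also have "\<dots> = x \<bullet> ((L ** G ** transpose L) *v x)"
    by (metis dot_lmul_matrix matrix_vector_mul_assoc transpose_transpose vector_transpose_matrix)
  finally show "0 < x \<bullet> ((L ** G ** transpose L) *v x)" .
qed

definition elim_matrix :: "'n::finite \<Rightarrow> ('n \<Rightarrow> real) \<Rightarrow> real^'n^'n" where
  "elim_matrix k c = (\<chi> i j. (if i = j then 1 else 0) - (if j = k then c i else 0))"

lemma elim_matrix_mult: "(elim_matrix k c ** A) $ i $ j = A $ i $ j - c i * A $ k $ j"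
proof -
  have "(elim_matrix k c ** A) $ i $ j
      = (\<Sum>m\<in>UNIV. (if m = i then A $ m $ j else 0) - (if m = k then c i * A $ m $ j else 0))"
    unfolding matrix_matrix_mult_def elim_matrix_def by (simp, rule sum.cong) (auto simp: algebra_simps)
  then show ?thesis by (simp add: sum_subtractf)
qed

lemma mult_transpose_elim_matrix:
  "(A ** transpose (elim_matrix k c)) $ i $ j = A $ i $ j - c j * A $ i $ k"
proof -
  have "(A ** transpose (elim_matrix k c)) $ i $ j
      = (\<Sum>m\<in>UNIV. (if m = j then A $ i $ m else 0) - (if m = k then c j * A $ i $ m else 0))"
    unfolding matrix_matrix_mult_def elim_matrix_def transpose_def
    by (simp, rule sum.cong) (auto simp: algebra_simps)
  then show ?thesis by (simp add: sum_subtractf)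
qed

lemma det_elim_matrix:
  fixes k :: "'n::finite"
  assumes "c k = 0"
  shows "det (elim_matrix k c) = 1"
proof -
  let ?x = "(\<chi> i. - c i) :: real^'n"
  have "?x = (\<Sum>j\<in>UNIV - {k}. (- c j) *s row j (mat 1 :: real^'n^'n))"
  proof (subst vec_eq_iff, intro allI)
    fix i
    have "(\<Sum>j\<in>UNIV - {k}. (- c j) *s row j (mat 1 :: real^'n^'n)) $ i
        = (\<Sum>j\<in>UNIV - {k}. (if j = i then - c j else 0))"
      unfolding sum_component by (rule sum.cong) (auto simp: row_def mat_def)
    also have "\<dots> = - c i" using assms by (simp add: sum.delta)
    finally show "?x $ i = (\<Sum>j\<in>UNIV - {k}. (- c j) *s row j (mat 1 :: real^'n^'n)) $ i" by simp
  qed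
  then have x: "?x \<in> vec.span {row j (mat 1 :: real^'n^'n) |j. j \<noteq> k}"
    by (simp only:) (intro vec.span_sum vec.span_scale vec.span_base, auto)
  have "transpose (elim_matrix k c) = (\<chi> r. if r = k then row k (mat 1) + ?x else row r (mat 1))"
    by (auto simp: vec_eq_iff transpose_def elim_matrix_def row_def mat_def assms)
  then have "det (transpose (elim_matrix k c)) = det (mat 1 :: real^'n^'n)"
    using det_row_span[OF x] by simp
  then show ?thesis by simp
qed

lemma pos_def_schur_step:
  fixes G :: "real^'n^'n"
  assumes G: "pos_def G"
  obtains H where "pos_def H" "det H = det G" "H $ k $ k = G $ k $ k"
    "\<And>j. j \<noteq> k \<Longrightarrow> H $ k $ j = 0"
    "\<And>i j. i \<noteq> k \<Longrightarrow> j \<noteq> k \<Longrightarrow> H $ i $ j = G $ i $ j - G $ i $ k * G $ k $ j / G $ k $ k"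
proof
  define c where "c i = (if i = k then 0 else G $ i $ k / G $ k $ k)" for i
  define L where "L = elim_matrix k c"
  have det_L: "det L = 1"
    unfolding L_def by (rule det_elim_matrix) (simp add: c_def)
  then show "pos_def (L ** G ** transpose L)"
    by (intro pos_def_congruence G) (simp add: invertible_det_nz)
  show "det (L ** G ** transpose L) = det G"
    by (simp add: det_mul det_L)
  have gkk: "G $ k $ k \<noteq> 0"
    using pos_def_diag_pos[OF G] by (metis less_irrefl)
  have entry: "(L ** G ** transpose L) $ i $ j = (G $ i $ j - c i * G $ k $ j) - c j * (G $ i $ k - c i * G $ k $ k)"
    for i j unfolding L_def by (simp add: elim_matrix_mult mult_transpose_elim_matrix)
  show "(L ** G ** transpose L) $ k $ k = G $ k $ k"
    by (simp add: entry c_def)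
  show "(L ** G ** transpose L) $ k $ j = 0" if "j \<noteq> k" for j
    using that gkk by (simp add: entry c_def pos_def_symmetric[OF G, of k j])
  show "(L ** G ** transpose L) $ i $ j = G $ i $ j - G $ i $ k * G $ k $ j / G $ k $ k"
    if "i \<noteq> k" "j \<noteq> k" for i j
    using that gkk by (simp add: entry c_def pos_def_symmetric[OF G, of k j] field_simps)
qed

text \<open>Induction on the rows and columns where \<open>G\<close> may have off-diagonal entries: passing
  to a Schur complement clears one of them, keeps the determinant and decreases the diagonal.\<close>

lemma pos_def_det_bounds_supported:
  fixes I :: "'n::finite set"
  assumes "finite I"
  shows "pos_def G \<Longrightarrow> (\<And>i j. i \<noteq> j \<Longrightarrow> i \<notin> I \<or> j \<notin> I \<Longrightarrow> G $ i $ j = 0)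
    \<Longrightarrow> 0 < det G \<and> det G \<le> (\<Prod>i\<in>UNIV. G $ i $ i)"
  using assms
proof (induction I arbitrary: G rule: finite_induct)
  case empty
  then have "det G = (\<Prod>i\<in>UNIV. G $ i $ i)"
    by (intro det_diagonal) auto
  then show ?case
    using pos_def_diag_pos[OF empty.prems(1)] by (simp add: prod_pos)
next
  case (insert k I)
  obtain H where H: "pos_def H" "det H = det G" "H $ k $ k = G $ k $ k"
      "\<And>j. j \<noteq> k \<Longrightarrow> H $ k $ j = 0"
      "\<And>i j. i \<noteq> k \<Longrightarrow> j \<noteq> k \<Longrightarrow> H $ i $ j = G $ i $ j - G $ i $ k * G $ k $ j / G $ k $ k"
    using pos_def_schur_step[OF insert.prems(1), of k] by blast
  have "H $ i $ j = 0" if "i \<noteq> j" "i \<notin> I \<or> j \<notin> I" for i j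
  proof -
    consider "i = k" | "j = k" | "i \<noteq> k" "j \<noteq> k" by blast
    then show ?thesis
    proof cases
      case 1 then show ?thesis using that H(4) by simp
    next
      case 2 then show ?thesis using that H(4) pos_def_symmetric[OF H(1), of i j] by simp
    next
      case 3 then show ?thesis using that H(5) insert.prems(2) by auto
    qed
  qed
  then have IH: "0 < det H \<and> det H \<le> (\<Prod>i\<in>UNIV. H $ i $ i)"
    using insert.IH[OF H(1)] by blast
  have "H $ i $ i \<le> G $ i $ i" for i
  proof (cases "i = k")
    case False
    have "0 \<le> G $ i $ k * G $ k $ i / G $ k $ k"
      using pos_def_diag_pos[OF insert.prems(1), of k]
      by (simp add: pos_def_symmetric[OF insert.prems(1), of k i])
    then show ?thesis using False H(5) by simp
  qed (simp add: H(3))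
  then have "(\<Prod>i\<in>UNIV. H $ i $ i) \<le> (\<Prod>i\<in>UNIV. G $ i $ i)"
    using pos_def_diag_pos[OF H(1)] by (intro prod_mono) (auto intro: less_imp_le)
  then show ?case using IH H(2) by auto
qed

lemma pos_def_det_pos: "pos_def G \<Longrightarrow> 0 < det G"
  using pos_def_det_bounds_supported[of UNIV G] by simp

theorem hadamard_inequality: "pos_def G \<Longrightarrow> det G \<le> (\<Prod>i\<in>UNIV. G $ i $ i)"
  using pos_def_det_bounds_supported[of UNIV G] by simp

lemma ln_det_le_trace:
  fixes G :: "real^'n^'n"
  assumes G: "pos_def G" and t: "t > 0"
  shows "ln (det G) \<le> CARD('n) * (ln t - 1) + trace G / t"
proof -
  have diag: "G $ j $ j > 0" for j
    using pos_def_diag_pos[OF G] .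
  have "ln (det G) \<le> ln (\<Prod>j\<in>UNIV. G $ j $ j)"
    using hadamard_inequality[OF G] pos_def_det_pos[OF G] by simp
  also have "\<dots> = (\<Sum>j\<in>UNIV. ln (G $ j $ j))"
    using diag by (simp add: ln_prod less_imp_neq[symmetric])
  also have "\<dots> \<le> (\<Sum>j\<in>UNIV. (ln t - 1) + G $ j $ j / t)"
  proof (rule sum_mono)
    fix j
    have "ln (G $ j $ j / t) \<le> G $ j $ j / t - 1"
      using diag[of j] t by (intro ln_le_minus_one) simp
    then show "ln (G $ j $ j) \<le> (ln t - 1) + G $ j $ j / t"
      using diag[of j] t by (simp add: ln_div)
  qed
  also have "\<dots> = CARD('n) * (ln t - 1) + trace G / t"
    by (simp add: sum.distrib trace_def sum_divide_distrib)
  finally show ?thesis .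
qed

lemma pos_def_invertible: "pos_def G \<Longrightarrow> invertible G"
  by (metis invertible_det_nz pos_def_det_pos less_irrefl)

lemma pos_def_matrix_inv:
  fixes G :: "real^'n^'n"
  assumes G: "pos_def G"
  shows "pos_def (matrix_inv G)" "det (matrix_inv G) = 1 / det G"
proof -
  let ?K = "matrix_inv G"
  have right: "G ** ?K = mat 1" and left: "?K ** G = mat 1"
    using pos_def_invertible[OF G] by (simp_all add: matrix_inv_right matrix_inv_left)
  have "det G * det ?K = 1"
    using right by (metis det_I det_mul)
  then show "det ?K = 1 / det G"
    using pos_def_det_pos[OF G] by (simp add: field_simps)
  have "transpose ?K = transpose ?K ** (G ** ?K)"
    using right by simp
  also have "\<dots> = transpose (G ** ?K) ** ?K"
    using G by (simp add: pos_def_def matrix_transpose_mul matrix_mul_assoc)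
  finally have "transpose ?K = ?K"
    using right by (simp add: transpose_mat)
  then have "?K ** G ** transpose ?K = ?K"
    using left by simp
  moreover have "invertible ?K"
    unfolding invertible_def using left right by blast
  ultimately show "pos_def ?K"
    using pos_def_congruence[OF G] by metis
qed

section \<open>Samples of full rank\<close>

definition col_matrix :: "('n \<Rightarrow> real^'m) \<Rightarrow> real^'n^'m" where
  "col_matrix f = (\<chi> i j. f j $ i)"

lemma column_col_matrix [simp]: "column j (col_matrix f) = f j"
  by (simp add: column_def col_matrix_def vec_eq_iff)

lemma trace_mult_sample_cov:
  "trace (K ** sample_cov n X) = (\<Sum>s<n. X s \<bullet> (K *v X s)) / n"
proof -
  have "trace (K ** sample_cov n X) = (\<Sum>i\<in>UNIV. \<Sum>j\<in>UNIV. \<Sum>s<n. X s $ i * (K $ i $ j * X s $ j)) / n"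
    by (simp add: trace_def matrix_matrix_mult_def sample_cov_def outer_def sum_component
        sum_distrib_left sum_divide_distrib mult_ac)
  also have "(\<Sum>i\<in>UNIV. \<Sum>j\<in>UNIV. \<Sum>s<n. X s $ i * (K $ i $ j * X s $ j))
      = (\<Sum>s<n. \<Sum>i\<in>UNIV. \<Sum>j\<in>UNIV. X s $ i * (K $ i $ j * X s $ j))"
    by (subst sum.swap, subst (2) sum.swap) (rule refl)
  also have "\<dots> = (\<Sum>s<n. X s \<bullet> (K *v X s))"
    by (simp add: inner_vec_def matrix_vector_mult_def sum_distrib_left)
  finally show ?thesis .
qed

lemma diag_transpose_mult_mult:
  "(transpose A ** K ** A) $ j $ j = column j A \<bullet> (K *v column j A)"
proof -
  have "(transpose A ** K ** A) $ j $ j = (\<Sum>b\<in>UNIV. \<Sum>a\<in>UNIV. A $ a $ j * (K $ a $ b * A $ b $ j))"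
    by (simp add: matrix_matrix_mult_def transpose_def sum_distrib_right sum_distrib_left mult_ac)
  also have "\<dots> = column j A \<bullet> (K *v column j A)"
    by (subst sum.swap) (simp add: inner_vec_def matrix_vector_mult_def column_def sum_distrib_left)
  finally show ?thesis .
qed

lemma loglik_le_if_independent_sample:
  fixes X :: "nat \<Rightarrow> real^'n" and \<tau> :: "'n \<Rightarrow> nat"
  defines "d \<equiv> det (col_matrix (X \<circ> \<tau>))"
  assumes \<tau>: "\<And>j. \<tau> j < n" "inj \<tau>" and d: "d \<noteq> 0" and \<Sigma>: "pos_def \<Sigma>"
  shows "loglik \<Sigma> (sample_cov n X) \<le> CARD('n) * (ln n - 1) - ln (d\<^sup>2)"
proof -
  define K where "K = matrix_inv \<Sigma>"
  define A where "A = col_matrix (X \<circ> \<tau>)"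
  define G where "G = transpose A ** K ** A"
  have n: "real n > 0"
    using \<tau>(1)[of undefined] by simp
  have K: "pos_def K" "det K = 1 / det \<Sigma>"
    unfolding K_def using pos_def_matrix_inv[OF \<Sigma>] by auto
  have "invertible (transpose A)"
    using d by (simp add: invertible_det_nz A_def d_def)
  then have G: "pos_def G"
    using pos_def_congruence[OF K(1), of "transpose A"] by (simp add: G_def)
  have "trace G = (\<Sum>s\<in>\<tau> ` UNIV. X s \<bullet> (K *v X s))"
    using \<tau>(2) by (simp add: trace_def G_def diag_transpose_mult_mult A_def sum.reindex)
  also have "\<dots> \<le> (\<Sum>s<n. X s \<bullet> (K *v X s))"
    using \<tau>(1) K(1) by (intro sum_mono2) (auto intro: pos_def_nonneg)
  finally have "trace G / n \<le> trace (K ** sample_cov n X)"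
    using n by (simp add: trace_mult_sample_cov divide_right_mono)
  moreover have "ln (det G) = ln (d\<^sup>2) - ln (det \<Sigma>)"
    using pos_def_det_pos[OF \<Sigma>] d
    by (simp add: G_def A_def d_def det_mul K(2) ln_div power2_eq_square)
  ultimately show ?thesis
    using ln_det_le_trace[OF G n] unfolding loglik_def K_def[symmetric] by linarith
qed

lemma max_loglik_finite_if_independent_sample:
  fixes X :: "nat \<Rightarrow> real^'n" and \<tau> :: "'n \<Rightarrow> nat"
  assumes "\<And>j. \<tau> j < n" "inj \<tau>" "det (col_matrix (X \<circ> \<tau>)) \<noteq> 0"
  shows "max_loglik B (sample_cov n X) < \<infinity>"
proof -
  have "max_loglik B (sample_cov n X) \<le> CARD('n) * (ln n - 1) - ln ((det (col_matrix (X \<circ> \<tau>)))\<^sup>2)"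
    unfolding max_loglik_def
    using loglik_le_if_independent_sample[OF assms] by (intro SUP_least) (simp add: PD_def)
  then show ?thesis
    by (rule le_less_trans) simp
qed

section \<open>Samples of deficient rank\<close>

lemma transpose_add: "transpose (A + B) = transpose A + transpose B"
  by (simp add: vec_eq_iff transpose_def)

lemma pos_def_add_scaled_identity:
  fixes A :: "real^'n^'n"
  assumes "transpose A = A" "\<And>z. 0 \<le> z \<bullet> (A *v z)" "e > 0"
  shows "pos_def (A + e *\<^sub>R mat 1)"
  unfolding pos_def_def
proof safe
  show "transpose (A + e *\<^sub>R mat 1) = A + e *\<^sub>R mat 1"
    using assms(1) by (simp add: transpose_add transpose_scalar)
  fix z :: "real^'n" assume "z \<noteq> 0"
  then have "0 < z \<bullet> (A *v z) + e * (z \<bullet> z)"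
    using assms(2,3) by (simp add: add_nonneg_pos)
  then show "0 < z \<bullet> ((A + e *\<^sub>R mat 1) *v z)"
    by (simp add: matrix_vector_mult_add_rdistrib inner_add_right scaleR_matrix_vector_assoc[symmetric])
qed

lemma coercive_on_subspace:
  fixes A :: "real^'n^'n"
  assumes V: "subspace V" and pos: "\<And>z. z \<in> V \<Longrightarrow> z \<noteq> 0 \<Longrightarrow> 0 < z \<bullet> (A *v z)"
  shows "\<exists>c>0. \<forall>z\<in>V. c * (z \<bullet> z) \<le> z \<bullet> (A *v z)"
proof (cases "V = {0}")
  case True
  then show ?thesis by (intro exI[of _ 1]) auto
next
  case False
  define q where "q z = z \<bullet> (A *v z)" for z
  define S where "S = sphere 0 1 \<inter> V"
  have normalize: "z /\<^sub>R norm z \<in> S" if "z \<in> V" "z \<noteq> 0" for z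
    using that V by (simp add: S_def subspace_scale)
  obtain z where "z \<in> V" "z \<noteq> 0"
    using False subspace_0[OF V] by blast
  then have "S \<noteq> {}"
    using normalize by blast
  moreover have "compact S"
    unfolding S_def using V by (intro compact_Int_closed compact_sphere closed_subspace)
  moreover have "continuous_on S q"
    unfolding q_def by (intro continuous_on_inner continuous_on_id matrix_vector_mult_linear_continuous_on)
  ultimately obtain z0 where z0: "z0 \<in> S" "\<And>z. z \<in> S \<Longrightarrow> q z0 \<le> q z"
    by (metis continuous_attains_inf)
  have "q z0 > 0"
    using z0(1) pos[of z0] by (fastforce simp: S_def q_def)
  moreover have "q z0 * (z \<bullet> z) \<le> q z" if "z \<in> V" for z
  proof (cases "z = 0")
    case False
    have "q z = q (norm z *\<^sub>R (z /\<^sub>R norm z))"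
      using False by simp
    also have "\<dots> = (norm z)\<^sup>2 * q (z /\<^sub>R norm z)"
      by (simp add: q_def matrix_vector_mult_scaleR power2_eq_square)
    finally have "q z = (norm z)\<^sup>2 * q (z /\<^sub>R norm z)" .
    moreover have "(z \<bullet> z) * q z0 \<le> (z \<bullet> z) * q (z /\<^sub>R norm z)"
      using z0(2)[OF normalize[OF that False]] by (simp add: mult_left_mono)
    ultimately show ?thesis
      by (simp add: power2_norm_eq_inner mult.commute)
  qed (simp add: q_def)
  ultimately show ?thesis
    unfolding q_def by blast
qed

lemma quadratic_form_matrix_inv_le:
  fixes A :: "real^'n^'n" and w x :: "real^'n"
  assumes sym: "transpose A = A" and nonneg: "\<And>z. 0 \<le> z \<bullet> (A *v z)" and Aw: "A *v w = 0"
    and c: "c > 0" and coercive: "\<And>z. z \<bullet> w = 0 \<Longrightarrow> c * (z \<bullet> z) \<le> z \<bullet> (A *v z)"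
    and e: "e > 0" and xw: "x \<bullet> w = 0"
  shows "x \<bullet> (matrix_inv (A + e *\<^sub>R mat 1) *v x) \<le> (x \<bullet> x) / c"
proof -
  define y where "y = matrix_inv (A + e *\<^sub>R mat 1) *v x"
  define y' where "y' = y - ((y \<bullet> w) / (w \<bullet> w)) *\<^sub>R w"
  have "invertible (A + e *\<^sub>R mat 1)"
    using pos_def_invertible pos_def_add_scaled_identity[OF sym nonneg e] by blast
  then have "(A + e *\<^sub>R mat 1) *v y = x"
    by (simp add: y_def matrix_inv_right matrix_vector_mul_assoc)
  then have Sy: "A *v y + e *\<^sub>R y = x"
    by (simp add: matrix_vector_mult_add_rdistrib scaleR_matrix_vector_assoc[symmetric])
  have y'w: "y' \<bullet> w = 0"
    by (cases "w = 0") (simp_all add: y'_def inner_diff_left)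
  \<comment> \<open>\<open>A\<close> only sees the component \<open>y'\<close> of \<open>y\<close> orthogonal to \<open>w\<close>, which coercivity controls.\<close>
  have "w \<bullet> (A *v y') = 0"
    using sym Aw by (metis dot_lmul_matrix inner_zero_left transpose_matrix_vector)
  then have "y' \<bullet> (A *v y') = y \<bullet> (A *v y)"
    using Aw by (simp add: y'_def matrix_vector_mult_diff_distrib matrix_vector_mult_scaleR
        inner_diff_left)
  then have "c * (y' \<bullet> y') \<le> y \<bullet> (A *v y)"
    using coercive[OF y'w] by simp
  also have "\<dots> \<le> y \<bullet> (A *v y) + e * (y \<bullet> y)"
    using e by simp
  also have "\<dots> = x \<bullet> y"
    by (simp flip: Sy add: inner_add_left inner_add_right inner_commute)
  also have xy: "\<dots> = x \<bullet> y'"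
    using xw by (simp add: y'_def inner_diff_right)
  also have "\<dots> \<le> norm x * norm y'"
    by (rule norm_cauchy_schwarz)
  finally have "c * norm y' \<le> norm x"
    by (cases "y' = 0") (auto simp: power2_norm_eq_inner[symmetric] power2_eq_square)
  then have "norm x * norm y' \<le> norm x * (norm x / c)"
    using c by (intro mult_left_mono) (simp_all add: field_simps)
  then show ?thesis
    using norm_cauchy_schwarz[of x y'] xy
    by (simp add: y_def power2_norm_eq_inner[symmetric] power2_eq_square)
qed

lemma det_eq_0_if_mult_vec_eq_0:
  fixes A :: "real^'n^'n"
  assumes "A *v w = 0" "w \<noteq> 0"
  shows "det A = 0"
  using assms inj_matrix_vector_mult invertible_det_nz
  by (metis injD matrix_vector_mult_0_right)

lemma tendsto_det_add_scaled_identity: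
  fixes A :: "real^'n^'n"
  shows "((\<lambda>e. det (A + e *\<^sub>R mat 1)) \<longlongrightarrow> det A) (at_right 0)"
proof -
  have "isCont (\<lambda>e. det (A + e *\<^sub>R (mat 1 :: real^'n^'n))) 0"
    unfolding det_def by (simp add: mat_def) (intro continuous_intros)
  then have "((\<lambda>e. det (A + e *\<^sub>R mat 1)) \<longlongrightarrow> det A) (at 0)"
    by (simp add: isCont_def)
  then show ?thesis
    by (rule tendsto_within_subset) simp
qed

lemma max_loglik_infinite_if_det_tendsto_0:
  fixes \<Sigma> :: "real \<Rightarrow> real^'n^'n"
  assumes PD: "\<And>e. e > 0 \<Longrightarrow> \<Sigma> e \<in> PD B"
    and det: "((\<lambda>e. det (\<Sigma> e)) \<longlongrightarrow> 0) (at_right 0)"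
    and trace: "\<And>e. e > 0 \<Longrightarrow> trace (matrix_inv (\<Sigma> e) ** S) \<le> T"
  shows "max_loglik B S = \<infinity>"
proof (rule ereal_top)
  fix r
  have "\<forall>\<^sub>F e in at_right 0. det (\<Sigma> e) < exp (- (r + T)) \<and> e > 0"
    by (intro eventually_conj order_tendstoD(2)[OF det] eventually_at_right_less) simp
  then obtain e where e: "det (\<Sigma> e) < exp (- (r + T))" "e > 0"
    using eventually_happens'[OF trivial_limit_at_right_real] by blast
  have "0 < det (\<Sigma> e)"
    using PD[OF e(2)] by (simp add: PD_def pos_def_det_pos)
  then have "ln (det (\<Sigma> e)) < - (r + T)"
    using e(1) ln_less_cancel_iff[of "det (\<Sigma> e)" "exp (- (r + T))"] by simp
  then have "r \<le> loglik (\<Sigma> e) S"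
    using trace[OF e(2)] by (simp add: loglik_def)
  then show "ereal r \<le> max_loglik B S"
    unfolding max_loglik_def by (intro SUP_upper2[OF PD[OF e(2)]]) simp
qed

definition edge_pairs :: "'n set set \<Rightarrow> ('n \<times> 'n) set" where
  "edge_pairs B = {(i, j). {i, j} \<in> B}"

definition edge_vector :: "real^'n \<Rightarrow> 'n \<Rightarrow> 'n \<Rightarrow> real^'n" where
  "edge_vector w i j = axis i (w $ j) - axis j (w $ i)"

definition edge_gram :: "'n::finite set set \<Rightarrow> real^'n \<Rightarrow> real^'n^'n" where
  "edge_gram B w = (\<Sum>(i, j)\<in>edge_pairs B. outer (edge_vector w i j))"

lemma inner_edge_vector: "edge_vector w i j \<bullet> z = w $ j * z $ i - w $ i * z $ j"
  by (simp add: edge_vector_def inner_diff_left inner_axis')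

lemma outer_mult_vec: "outer u *v v = (u \<bullet> v) *\<^sub>R u"
  by (simp add: outer_def matrix_vector_mult_def vec_eq_iff inner_vec_def sum_distrib_left mult_ac)

lemma sum_matrix_mult_vec: "sum A S *v v = (\<Sum>x\<in>S. A x *v v)"
  by (induction S rule: infinite_finite_induct) (simp_all add: matrix_vector_mult_add_rdistrib)

lemma edge_gram_mult_vec:
  "edge_gram B w *v v = (\<Sum>(i, j)\<in>edge_pairs B. (edge_vector w i j \<bullet> v) *\<^sub>R edge_vector w i j)"
  unfolding edge_gram_def sum_matrix_mult_vec by (simp add: case_prod_unfold outer_mult_vec)

lemma inner_edge_gram:
  "z \<bullet> (edge_gram B w *v v) = (\<Sum>(i, j)\<in>edge_pairs B. (edge_vector w i j \<bullet> z) * (edge_vector w i j \<bullet> v))"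
  unfolding edge_gram_mult_vec inner_sum_right by (simp add: case_prod_unfold inner_commute mult_ac)

lemma edge_gram_mult_self: "edge_gram B w *v w = 0"
  by (simp add: edge_gram_mult_vec inner_edge_vector case_prod_unfold mult.commute)

lemma transpose_edge_gram: "transpose (edge_gram B w) = edge_gram B w"
  by (simp add: vec_eq_iff transpose_def edge_gram_def sum_component outer_def case_prod_unfold
      mult.commute)

lemma edge_gram_nonneg: "0 \<le> z \<bullet> (edge_gram B w *v z)"
  unfolding inner_edge_gram by (intro sum_nonneg) auto

lemma edge_gram_eq_0_off_edges:
  assumes "i \<noteq> j" "{i, j} \<notin> B"
  shows "edge_gram B w $ i $ j = 0"
proof -
  have "edge_vector w k l $ i * edge_vector w k l $ j = 0" if "(k, l) \<in> edge_pairs B" for k l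
    using that assms by (auto simp: edge_pairs_def edge_vector_def axis_def insert_commute)
  then show ?thesis
    unfolding edge_gram_def sum_component by (auto simp: outer_def intro!: sum.neutral)
qed

lemma edge_gram_regularized_in_PD:
  assumes "e > 0"
  shows "edge_gram B w + e *\<^sub>R mat 1 \<in> PD B"
  using pos_def_add_scaled_identity[OF transpose_edge_gram edge_gram_nonneg assms]
  by (simp add: PD_def edge_gram_eq_0_off_edges mat_def)

lemma edge_gram_pos_on_orthogonal:
  fixes B :: "'n::finite set set" and w z :: "real^'n"
  assumes conn: "bg_connected B" and w: "\<And>i. w $ i \<noteq> 0"
    and zw: "z \<bullet> w = 0" and z: "z \<noteq> 0"
  shows "0 < z \<bullet> (edge_gram B w *v z)"
proof (rule ccontr)
  assume "\<not> 0 < z \<bullet> (edge_gram B w *v z)"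
  then have "(\<Sum>(i, j)\<in>edge_pairs B. (edge_vector w i j \<bullet> z) * (edge_vector w i j \<bullet> z)) = 0"
    using edge_gram_nonneg[of z B w] by (simp add: inner_edge_gram)
  then have "edge_vector w i j \<bullet> z = 0" if "(i, j) \<in> edge_pairs B" for i j
    using that by (subst (asm) sum_nonneg_eq_0_iff) auto
  then have step: "z $ i / w $ i = z $ j / w $ j" if "(i, j) \<in> edge_pairs B" for i j
    using that w[of i] w[of j] by (simp add: inner_edge_vector field_simps)
  obtain k :: 'n where True by blast
  have "z $ i / w $ i = z $ k / w $ k" for i
  proof -
    have "(k, i) \<in> (edge_pairs B)\<^sup>*"
      using conn by (simp add: bg_connected_def edge_pairs_def)
    then show ?thesis
      by (induction rule: rtrancl_induct) (simp_all add: step)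
  qed
  then have "z = (z $ k / w $ k) *\<^sub>R w"
    using w by (simp add: vec_eq_iff field_simps)
  then have "(z $ k / w $ k) * (w \<bullet> w) = 0"
    using zw by (metis inner_scaleR_left)
  then show False
    using z w \<open>z = _\<close> by auto
qed

lemma max_loglik_infinite_if_orthogonal:
  fixes B :: "'n::finite set set" and w :: "real^'n" and X :: "nat \<Rightarrow> real^'n"
  assumes conn: "bg_connected B" and w: "\<And>i. w $ i \<noteq> 0"
    and orth: "\<And>s. s < n \<Longrightarrow> X s \<bullet> w = 0"
  shows "max_loglik B (sample_cov n X) = \<infinity>"
proof -
  let ?A = "edge_gram B w"
  obtain c where c: "c > 0" and coercive: "\<And>z. z \<bullet> w = 0 \<Longrightarrow> c * (z \<bullet> z) \<le> z \<bullet> (?A *v z)"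
    using coercive_on_subspace[OF subspace_hyperplane2, of w ?A]
      edge_gram_pos_on_orthogonal[OF conn w] by blast
  have "w \<noteq> 0"
    using w by (metis zero_index)
  then have "((\<lambda>e. det (?A + e *\<^sub>R mat 1)) \<longlongrightarrow> 0) (at_right 0)"
    using tendsto_det_add_scaled_identity[of ?A]
    by (simp add: det_eq_0_if_mult_vec_eq_0[OF edge_gram_mult_self])
  moreover have "trace (matrix_inv (?A + e *\<^sub>R mat 1) ** sample_cov n X) \<le> (\<Sum>s<n. (X s \<bullet> X s) / c) / n"
    if "e > 0" for e
    unfolding trace_mult_sample_cov
    using that orth
    by (intro divide_right_mono sum_mono quadratic_form_matrix_inv_le[OF transpose_edge_gram
          edge_gram_nonneg edge_gram_mult_self c coercive]) auto
  ultimately show ?thesis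
    by (intro max_loglik_infinite_if_det_tendsto_0[where \<Sigma> = "\<lambda>e. ?A + e *\<^sub>R mat 1"]
        edge_gram_regularized_in_PD)
qed

section \<open>Almost sure properties of the sample\<close>

lemma AE_PiM_update:
  fixes M :: "'i \<Rightarrow> 'a measure"
  assumes M: "\<And>j. j \<in> I \<Longrightarrow> prob_space (M j)" and i: "i \<in> I"
    and P: "Measurable.pred (PiM I M) P"
    and AE: "AE X in PiM (I - {i}) M. AE x in M i. P (X(i := x))"
  shows "AE X in PiM I M. P X"
proof -
  define N where "N = PiM (I - {i}) M"
  define upd where "upd = (\<lambda>(x, X). X(i := x) :: 'i \<Rightarrow> 'a)"
  interpret Mi: prob_space "M i" using M i .
  interpret N: prob_space N unfolding N_def using M by (intro prob_space_PiM) auto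
  interpret MN: pair_sigma_finite "M i" N ..
  have distr: "distr (M i \<Otimes>\<^sub>M N) (PiM I M) upd = PiM I M"
    using distr_pair_PiM_eq_PiM[of "I - {i}" M i] M i by (simp add: N_def upd_def insert_absorb[OF i])
  have "(\<lambda>(X, x). X(i := x)) \<in> N \<Otimes>\<^sub>M M i \<rightarrow>\<^sub>M PiM I M"
    using measurable_add_dim[of i "I - {i}" M] by (simp add: N_def insert_absorb[OF i])
  then have "(\<lambda>(X, x). X(i := x)) \<circ> (\<lambda>(x, X). (X, x)) \<in> M i \<Otimes>\<^sub>M N \<rightarrow>\<^sub>M PiM I M"
    by (rule measurable_comp[OF measurable_pair_swap'])
  moreover have "(\<lambda>(X, x). X(i := x)) \<circ> (\<lambda>(x, X). (X, x)) = upd"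
    by (auto simp: upd_def)
  ultimately have upd: "upd \<in> M i \<Otimes>\<^sub>M N \<rightarrow>\<^sub>M PiM I M"
    by simp
  have Pupd: "{z \<in> space (M i \<Otimes>\<^sub>M N). P (upd z)} \<in> sets (M i \<Otimes>\<^sub>M N)"
    using measurable_comp[OF upd P] by (simp add: comp_def pred_def)
  have "AE X in N. AE x in M i. P (upd (x, X))"
    unfolding N_def upd_def using AE by simp
  then have "AE x in M i. AE X in N. P (upd (x, X))"
    using MN.AE_commute[of "\<lambda>x X. P (upd (x, X))"] Pupd by simp
  then have "AE z in M i \<Otimes>\<^sub>M N. P (upd z)"
    by (rule MN.AE_pair_measure[OF Pupd])
  then have "AE X in distr (M i \<Otimes>\<^sub>M N) (PiM I M) upd. P X"
    using AE_distr_iff[OF upd, of P] P by (simp add: pred_def)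
  then show ?thesis
    by (simp only: distr)
qed

lemma borel_measurable_det:
  fixes A :: "'a \<Rightarrow> real^'n^'n"
  assumes "\<And>i j. (\<lambda>x. A x $ i $ j) \<in> borel_measurable N"
  shows "(\<lambda>x. det (A x)) \<in> borel_measurable N"
  unfolding det_def
  by (intro borel_measurable_sum borel_measurable_times borel_measurable_prod borel_measurable_const assms)

lemma borel_measurable_sample_component:
  fixes M :: "(real^'n) measure"
  assumes "sets M = sets lborel" "k \<in> I"
  shows "(\<lambda>X. X k $ i) \<in> borel_measurable (PiM I (\<lambda>_. M))"
proof -
  have "(\<lambda>x::real^'n. x $ i) \<in> borel_measurable lborel"
    by (simp add: borel_measurable_continuous_onI continuous_on_component)
  then have "(\<lambda>x::real^'n. x $ i) \<in> borel_measurable M"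
    by (subst measurable_cong_sets[OF assms(1) refl])
  then show ?thesis
    by (rule measurable_compose[OF measurable_component_singleton[OF assms(2)]])
qed

lemma AE_inner_ne_0:
  fixes M :: "(real^'n) measure"
  assumes "sets M = sets lborel" "absolutely_continuous lborel M" "a \<noteq> 0"
  shows "AE y in M. a \<bullet> y \<noteq> 0"
proof -
  let ?H = "{y. a \<bullet> y = 0}"
  have "negligible ?H"
    using assms(3) by (intro negligible_hyperplane) simp
  moreover have "?H \<in> sets lborel"
    by (simp add: closed_hyperplane)
  ultimately have "?H \<in> null_sets lborel"
    by (simp add: negligible_iff_null_sets null_sets_completion_iff)
  then have "?H \<in> null_sets M"
    using assms(2) by (auto simp: absolutely_continuous_def)
  then show ?thesis
    by (auto dest: AE_not_in)
qed

lemma det_col_matrix_update: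
  fixes f :: "'n::finite \<Rightarrow> real^'n"
  assumes "det (col_matrix f) \<noteq> 0"
  shows "det (col_matrix (f(j := y))) = (row j (matrix_inv (col_matrix f)) \<bullet> y) * det (col_matrix f)"
    and "row j (matrix_inv (col_matrix f)) \<noteq> 0"
proof -
  let ?A = "col_matrix f"
  have "?A *v (matrix_inv ?A *v y) = y" for y
    using assms by (simp add: invertible_det_nz matrix_inv_right matrix_vector_mul_assoc)
  then have "col_matrix (f(j := y)) = (\<chi> i k. if k = j then (?A *v (matrix_inv ?A *v y)) $ i else ?A $ i $ k)"
    for y by (simp add: col_matrix_def vec_eq_iff)
  then have cramer: "det (col_matrix (f(j := y))) = (row j (matrix_inv ?A) \<bullet> y) * det ?A" for y
    by (simp add: cramer_lemma matrix_mult_dot row_def)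
  then show "det (col_matrix (f(j := y))) = (row j (matrix_inv ?A) \<bullet> y) * det ?A" .
  have "f(j := f j) = f"
    by simp
  then have "row j (matrix_inv ?A) \<bullet> f j = 1"
    using cramer[of "f j"] assms by simp
  then show "row j (matrix_inv ?A) \<noteq> 0"
    by auto
qed

lemma pred_det_col_matrix_ne_0:
  fixes M :: "(real^'n) measure" and F :: "'n \<Rightarrow> real^'n" and \<tau> :: "'n \<Rightarrow> nat"
  assumes M: "sets M = sets lborel" and \<tau>: "\<tau> ` J \<subseteq> I"
  shows "Measurable.pred (PiM I (\<lambda>_. M))
    (\<lambda>X. det (col_matrix (\<lambda>j. if j \<in> J then X (\<tau> j) else F j)) \<noteq> 0)"
proof -
  have "(\<lambda>X. det (col_matrix (\<lambda>j. if j \<in> J then X (\<tau> j) else F j))) \<in> borel_measurable (PiM I (\<lambda>_. M))"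
  proof (intro borel_measurable_det)
    fix i k
    show "(\<lambda>X. col_matrix (\<lambda>j. if j \<in> J then X (\<tau> j) else F j) $ i $ k) \<in> borel_measurable (PiM I (\<lambda>_. M))"
    proof (cases "k \<in> J")
      case True
      then have "\<tau> k \<in> I"
        using \<tau> by blast
      then show ?thesis
        using True by (simp add: col_matrix_def borel_measurable_sample_component[OF M])
    qed (simp add: col_matrix_def)
  qed
  then show ?thesis
    by measurable
qed

text \<open>The columns in \<open>J\<close> are replaced by sample vectors one at a time; by Cramer's rule,
  given the other columns the determinant vanishes only on a hyperplane.\<close>

lemma AE_det_col_matrix_ne_0:
  fixes M :: "(real^'n) measure" and F :: "'n \<Rightarrow> real^'n" and \<tau> :: "'n \<Rightarrow> nat"
  assumes M: "prob_space M" "sets M = sets lborel" "absolutely_continuous lborel M"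
    and F: "det (col_matrix F) \<noteq> 0" and \<tau>: "inj_on \<tau> J" "\<tau> ` J \<subseteq> I"
  shows "AE X in PiM I (\<lambda>_. M). det (col_matrix (\<lambda>j. if j \<in> J then X (\<tau> j) else F j)) \<noteq> 0"
  using finite[of J] \<tau>
proof (induction J arbitrary: I rule: finite_induct)
  case empty
  then show ?case using F by simp
next
  case (insert j J)
  define cols where "cols X k = (if k \<in> J then X (\<tau> k) else F k)" for X k
  have \<tau>J: "\<tau> k \<noteq> \<tau> j" if "k \<in> J" for k
    using insert.prems(1) insert.hyps(2) that by (auto simp: inj_on_def)
  have cols_update: "(\<lambda>k. if k \<in> insert j J then (X(\<tau> j := x)) (\<tau> k) else F k) = (cols X)(j := x)"
    for X x using \<tau>J insert.hyps(2) by (auto simp: cols_def)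
  have IH: "AE X in PiM (I - {\<tau> j}) (\<lambda>_. M). det (col_matrix (cols X)) \<noteq> 0"
    unfolding cols_def using insert.prems \<tau>J by (intro insert.IH) (auto simp: inj_on_insert)
  have AE_update: "AE X in PiM (I - {\<tau> j}) (\<lambda>_. M). AE x in M.
      det (col_matrix (\<lambda>k. if k \<in> insert j J then (X(\<tau> j := x)) (\<tau> k) else F k)) \<noteq> 0"
    unfolding cols_update using IH
  proof eventually_elim
    case (elim X)
    show ?case
      using AE_inner_ne_0[OF M(2,3) det_col_matrix_update(2)[OF elim, of j]]
      by eventually_elim (simp add: det_col_matrix_update(1)[OF elim] elim)
  qed
  have pred: "Measurable.pred (PiM I (\<lambda>_. M))
      (\<lambda>X. det (col_matrix (\<lambda>k. if k \<in> insert j J then X (\<tau> k) else F k)) \<noteq> 0)"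
    using insert.prems(2) by (rule pred_det_col_matrix_ne_0[OF M(2)])
  show ?case
    by (rule AE_PiM_update[where i = "\<tau> j", OF _ _ pred AE_update]) (use M(1) insert.prems(2) in simp_all)
qed

lemma subspace_exists_nowhere_zero:
  fixes V :: "(real^'n) set"
  assumes V: "subspace V" and coord: "\<And>i. \<exists>a\<in>V. a $ i \<noteq> 0"
  shows "\<exists>w\<in>V. \<forall>i. w $ i \<noteq> 0"
proof -
  have "\<exists>v\<in>V. \<forall>i\<in>K. v $ i \<noteq> 0" for K :: "'n set"
    using finite[of K]
  proof (induction K rule: finite_induct)
    case empty
    then show ?case
      using subspace_0[OF V] by blast
  next
    case (insert k K)
    obtain v where v: "v \<in> V" "\<forall>i\<in>K. v $ i \<noteq> 0"
      using insert.IH by blast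
    obtain a where a: "a \<in> V" "a $ k \<noteq> 0"
      using coord by blast
    have "\<exists>t::real. t \<notin> (\<lambda>i. - v $ i / a $ i) ` insert k K"
      by (rule ex_new_if_finite) (simp_all add: infinite_UNIV_char_0)
    then obtain t where t: "t \<notin> (\<lambda>i. - v $ i / a $ i) ` insert k K"
      by blast
    have "(v + t *\<^sub>R a) $ i \<noteq> 0" if "i \<in> insert k K" for i
    proof (cases "a $ i = 0")
      case True
      then show ?thesis
        using that a(2) v(2) by auto
    next
      case False
      have "t \<noteq> - v $ i / a $ i"
        using that t by blast
      then show ?thesis
        using False by (simp add: field_simps)
    qed
    moreover have "v + t *\<^sub>R a \<in> V"
      using V v(1) a(1) by (simp add: subspace_add subspace_scale)
    ultimately show ?case
      by blast
  qed
  from this[of UNIV] show ?thesis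
    by simp
qed

lemma col_matrix_axis: "col_matrix (\<lambda>j. axis j 1) = (mat 1 :: real^'n^'n)"
  by (simp add: col_matrix_def vec_eq_iff axis_def mat_def)

lemma AE_max_loglik_finite:
  fixes M :: "(real^'n) measure" and B :: "'n set set"
  assumes M: "prob_space M" "sets M = sets lborel" "absolutely_continuous lborel M"
    and n: "CARD('n) \<le> n"
  shows "AE X in sample_measure n M. max_loglik B (sample_cov n X) < \<infinity>"
proof -
  obtain \<tau> :: "'n \<Rightarrow> nat" where \<tau>: "bij_betw \<tau> UNIV {..<CARD('n)}"
    using ex_bij_betw_finite_nat[of "UNIV :: 'n set"] atLeast0LessThan by auto
  then have inj: "inj \<tau>" and bound: "\<And>j. \<tau> j < n"
    using n by (auto simp: bij_betw_def dest: order.strict_trans2)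
  have "AE X in sample_measure n M. det (col_matrix (X \<circ> \<tau>)) \<noteq> 0"
    unfolding sample_measure_def
    using AE_det_col_matrix_ne_0[OF M, of "\<lambda>j. axis j 1" \<tau> UNIV "{..<n}"] inj bound
    by (auto simp: col_matrix_axis comp_def image_subset_iff)
  then show ?thesis
    by (rule eventually_mono) (rule max_loglik_finite_if_independent_sample[OF bound inj])
qed

text \<open>Almost surely the sample and the coordinate vectors \<open>e\<^sub>j\<close>, \<open>j \<notin> J\<close>, form a basis;
  as \<open>i \<notin> J\<close>, the \<open>i\<close>-th row of the inverse of the basis matrix is the required vector.\<close>

lemma AE_exists_orthogonal_nonzero_at:
  fixes M :: "(real^'n) measure"
  assumes M: "prob_space M" "sets M = sets lborel" "absolutely_continuous lborel M"
    and n: "n < CARD('n)"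
  shows "AE X in sample_measure n M. \<exists>a. (\<forall>s<n. X s \<bullet> a = 0) \<and> a $ i \<noteq> 0"
proof -
  have "n \<le> card (UNIV - {i})"
    using n by (simp add: card_Diff_singleton)
  then obtain J where J: "J \<subseteq> UNIV - {i}" "card J = n"
    by (meson obtain_subset_with_card_n)
  obtain \<tau> :: "'n \<Rightarrow> nat" where \<tau>: "bij_betw \<tau> J {..<n}"
    using ex_bij_betw_finite_nat[of J] J(2) atLeast0LessThan by auto
  define A where "A X = col_matrix (\<lambda>j. if j \<in> J then X (\<tau> j) else axis j 1)" for X
  have "AE X in sample_measure n M. det (A X) \<noteq> 0"
    unfolding sample_measure_def A_def
    using AE_det_col_matrix_ne_0[OF M, of "\<lambda>j. axis j 1" \<tau> J "{..<n}"] \<tau>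
    by (simp add: col_matrix_axis bij_betw_def)
  then show ?thesis
  proof eventually_elim
    case (elim X)
    define a where "a = row i (matrix_inv (A X))"
    have inv: "matrix_inv (A X) ** A X = mat 1"
      using elim by (simp add: invertible_det_nz matrix_inv_left)
    have a: "a \<bullet> column k (A X) = (if k = i then 1 else 0)" for k
      using arg_cong[OF inv, of "\<lambda>C. C $ i $ k"]
      by (simp add: a_def row_def column_def inner_vec_def matrix_matrix_mult_def mat_def)
    have "X s \<bullet> a = 0" if "s < n" for s
    proof -
      have "X s = column (inv_into J \<tau> s) (A X)" "inv_into J \<tau> s \<noteq> i"
        using that \<tau> J(1) bij_betw_inv_into_right[OF \<tau>] bij_betw_apply[OF bij_betw_inv_into[OF \<tau>]]
        by (auto simp: A_def)
      then show ?thesis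
        using a[of "inv_into J \<tau> s"] by (simp add: inner_commute)
    qed
    moreover have "column i (A X) = axis i 1"
      using J(1) by (auto simp: A_def)
    then have "a $ i = 1"
      using a[of i] by (simp add: inner_axis)
    ultimately show ?case
      by (intro exI[of _ a]) simp
  qed
qed

lemma AE_max_loglik_infinite:
  fixes M :: "(real^'n) measure" and B :: "'n set set"
  assumes M: "prob_space M" "sets M = sets lborel" "absolutely_continuous lborel M"
    and conn: "bg_connected B" and n: "n < CARD('n)"
  shows "AE X in sample_measure n M. max_loglik B (sample_cov n X) = \<infinity>"
proof -
  have "AE X in sample_measure n M. \<forall>i. \<exists>a. (\<forall>s<n. X s \<bullet> a = 0) \<and> a $ i \<noteq> 0"
    by (intro eventually_all_finite AE_exists_orthogonal_nonzero_at[OF M n])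
  then show ?thesis
  proof eventually_elim
    case (elim X)
    have "subspace {a. \<forall>s<n. X s \<bullet> a = 0}"
      by (auto simp: subspace_def inner_add_right)
    then obtain w where "\<forall>s<n. X s \<bullet> w = 0" "\<forall>i. w $ i \<noteq> 0"
      using subspace_exists_nowhere_zero[of "{a. \<forall>s<n. X s \<bullet> a = 0}"] elim by auto
    then show ?case
      by (intro max_loglik_infinite_if_orthogonal[OF conn]) auto
  qed
qed

lemma tau_eqI:
  assumes M: "prob_space M"
    and finite: "\<And>n. N \<le> n \<Longrightarrow> AE X in sample_measure n M. max_loglik B (sample_cov n X) < \<infinity>"
    and infinite: "\<And>n. n < N \<Longrightarrow> AE X in sample_measure n M. max_loglik B (sample_cov n X) = \<infinity>"
  shows "tau M B = N"
  unfolding tau_def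
proof (rule Least_equality)
  fix N' assume N': "\<forall>n\<ge>N'. AE X in sample_measure n M. max_loglik B (sample_cov n X) < \<infinity>"
  show "N \<le> N'"
  proof (rule ccontr)
    assume "\<not> N \<le> N'"
    then have "AE X in sample_measure N' M. False"
      using N' infinite[of N'] by (auto elim: eventually_rev_mp)
    moreover have "prob_space (sample_measure N' M)"
      unfolding sample_measure_def using M by (intro prob_space_PiM)
    ultimately show False
      by (simp add: prob_space.AE_False)
  qed
qed (use finite in blast)

theorem theorem5:
  fixes B :: "'p::finite set set" and M :: "(real^'p) measure"
  assumes "bidirected_edges B" and "bg_connected B"
    and "prob_space M" and "sets M = sets lborel"
    and "absolutely_continuous lborel M"
  shows "tau M B = CARD('p) \<and>
    (\<forall>n < CARD('p). AE X in sample_measure n M. max_loglik B (sample_cov n X) = \<infinity>)"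
proof -
  have "tau M B = CARD('p)"
    using assms(3-5) by (intro tau_eqI AE_max_loglik_finite AE_max_loglik_infinite assms(2))
  then show ?thesis
    using AE_max_loglik_infinite[OF assms(3-5,2)] by blast
qed

end
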